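(* Let $\mathcal T\in\Sigma^n$ be a text and $\pi$ be an order-preserving permutation for $\mathcal T$. For any string $P\in\Sigma^+$ that occurs in $\mathcal T$ there exists exactly one primary occurrence $P=\mathcal T[i,i+|P|-1]$. Furthermore, this occurrence is the one minimizing $\pi(i)$ among all occurrences of $P$.
   Context: A text is a string $\mathcal T\in\Sigma^n$ over an integer alphabet whose last symbol $\mathcal T[n]=\$$ occurs only there and is smallest. For $i\ne j$, $\mathrm{rlce}(i,j)$ is the length of the longest common prefix of $\mathcal T[i,n]$ and $\mathcal T[j,n]$. A permutation $\pi:[n]\to[n]$ is order-preserving for $\mathcal T$ if for all $i,j\in[n-1]$, $\pi(i)<\pi(j)$ and $\mathcal T[i,i+1]=\mathcal T[j,j+1]$ imply $\pi(i+1)<\pi(j+1)$. $\mathrm{LPF}_\pi[i]=0$ if $\pi(i)=1$, else $\mathrm{LPF}_\pi[i]=\max_{\pi(j)<\pi(i)}\mathrm{rlce}(j,i)$. An occurrence $\mathcal T[i,i+|P|-1]=P$ is primary if $\mathrm{LPF}_\pi[i]<|P|$, and secondary otherwise. *)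

theory Defs
  imports Main
begin

text \<open>Texts are lists; positions are 1-indexed as in the paper: position i of T is T ! (i - 1).\<close>

definition tchar :: "'a list \<Rightarrow> nat \<Rightarrow> 'a" where
  "tchar T i = T ! (i - 1)"

definition is_text :: "'a::linorder list \<Rightarrow> bool" where
  "is_text T \<longleftrightarrow> length T \<ge> 1 \<and>
     (\<forall>i\<in>{1..<length T}. tchar T (length T) < tchar T i)"

fun lcp_len :: "'a list \<Rightarrow> 'a list \<Rightarrow> nat" where
  "lcp_len (x # xs) (y # ys) = (if x = y then Suc (lcp_len xs ys) else 0)"
| "lcp_len _ _ = 0"

definition suffix_at :: "'a list \<Rightarrow> nat \<Rightarrow> 'a list" where
  "suffix_at T i = drop (i - 1) T"

definition rlce :: "'a list \<Rightarrow> nat \<Rightarrow> nat \<Rightarrow> nat" where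
  "rlce T i j = lcp_len (suffix_at T i) (suffix_at T j)"

definition order_preserving :: "'a list \<Rightarrow> (nat \<Rightarrow> nat) \<Rightarrow> bool" where
  "order_preserving T \<pi> \<longleftrightarrow>
     bij_betw \<pi> {1..length T} {1..length T} \<and>
     (\<forall>i\<in>{1..length T - 1}. \<forall>j\<in>{1..length T - 1}.
        \<pi> i < \<pi> j \<and> tchar T i = tchar T j \<and> tchar T (i+1) = tchar T (j+1)
        \<longrightarrow> \<pi> (i+1) < \<pi> (j+1))"

definition LPF :: "'a list \<Rightarrow> (nat \<Rightarrow> nat) \<Rightarrow> nat \<Rightarrow> nat" where
  "LPF T \<pi> i = (if \<pi> i = 1 then 0
     else Max {rlce T j i | j. j \<in> {1..length T} \<and> \<pi> j < \<pi> i})"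

definition occurs_at :: "'a list \<Rightarrow> 'a list \<Rightarrow> nat \<Rightarrow> bool" where
  "occurs_at T P i \<longleftrightarrow> 1 \<le> i \<and> i + length P - 1 \<le> length T \<and>
     (\<forall>k<length P. tchar T (i + k) = P ! k)"

definition primary_occ :: "'a list \<Rightarrow> (nat \<Rightarrow> nat) \<Rightarrow> 'a list \<Rightarrow> nat \<Rightarrow> bool" where
  "primary_occ T \<pi> P i \<longleftrightarrow> occurs_at T P i \<and> LPF T \<pi> i < length P"

end

theory Submission
  imports Defs
begin

text \<open>
  Two occurrences of \<open>P\<close> have suffixes agreeing on at least \<open>|P|\<close> symbols, and conversely a
  position whose suffix agrees with an occurrence of \<open>P\<close> on \<open>|P|\<close> symbols is an occurrence.
  Hence an occurrence \<open>i\<close> is primary iff no occurrence \<open>j\<close> has \<open>\<pi>(j) < \<pi>(i)\<close>, i.e. iff it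
  minimizes \<open>\<pi>\<close> among the occurrences; as \<open>\<pi>\<close> is injective, this minimizer is unique.
\<close>

lemma lcp_len_ge_iff:
  "k \<le> lcp_len xs ys \<longleftrightarrow> k \<le> length xs \<and> k \<le> length ys \<and> take k xs = take k ys"
proof (induction xs ys arbitrary: k rule: lcp_len.induct)
  case (1 x xs y ys)
  then show ?case by (cases k) auto
qed auto

lemma occurs_at_iff_take_suffix_at:
  assumes "P \<noteq> []"
  shows "occurs_at T P i \<longleftrightarrow> 1 \<le> i \<and> take (length P) (suffix_at T i) = P"
proof
  assume "occurs_at T P i"
  then have "1 \<le> i" "i + length P - 1 \<le> length T" "\<forall>k<length P. T ! (i - 1 + k) = P ! k"
    by (auto simp: occurs_at_def tchar_def add.commute)
  then show "1 \<le> i \<and> take (length P) (suffix_at T i) = P"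
    by (auto simp: suffix_at_def intro!: nth_equalityI)
next
  assume *: "1 \<le> i \<and> take (length P) (suffix_at T i) = P"
  then have len: "length P \<le> length T - (i - 1)"
    by (metis length_drop length_take min.cobounded1 suffix_at_def)
  have "T ! (i + k - 1) = P ! k" if "k < length P" for k
  proof -
    have "P ! k = drop (i - 1) T ! k"
      using * that by (metis nth_take suffix_at_def)
    also have "\<dots> = T ! (i + k - 1)"
      using * len that by simp
    finally show ?thesis by simp
  qed
  moreover have "i + length P - 1 \<le> length T"
    using len assms by (cases P) auto
  ultimately show "occurs_at T P i"
    using * by (auto simp: occurs_at_def tchar_def)
qed

lemma occurs_at_iff_rlce_ge:
  assumes "P \<noteq> []" "occurs_at T P i" "1 \<le> j"
  shows "occurs_at T P j \<longleftrightarrow> length P \<le> rlce T j i"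
proof -
  have take_i: "take (length P) (suffix_at T i) = P"
    using assms(1,2) occurs_at_iff_take_suffix_at by blast
  have long_enough: "length P \<le> length xs" if "take (length P) xs = P" for xs :: "'a list"
    using that by (metis length_take min.cobounded1)
  show ?thesis
    unfolding rlce_def lcp_len_ge_iff occurs_at_iff_take_suffix_at[OF assms(1)] take_i
    using assms(3) long_enough[OF take_i] long_enough[of "suffix_at T j"] by blast
qed

lemma occurs_at_in_range:
  assumes "P \<noteq> []" "occurs_at T P i"
  shows "i \<in> {1..length T}"
  using assms by (cases P) (auto simp: occurs_at_def)

text \<open>The hypothesis \<open>0 < m\<close> covers the case \<open>\<pi> i = 1\<close>, where \<open>LPF\<close> is \<open>0\<close> by convention.\<close>

lemma LPF_less_iff:
  assumes "bij_betw \<pi> {1..length T} {1..length T}" "i \<in> {1..length T}" "0 < m"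
  shows "LPF T \<pi> i < m \<longleftrightarrow> (\<forall>j\<in>{1..length T}. \<pi> j < \<pi> i \<longrightarrow> rlce T j i < m)"
proof (cases "\<pi> i = 1")
  case True
  have "\<not> \<pi> j < \<pi> i" if "j \<in> {1..length T}" for j
  proof -
    have "\<pi> j \<in> {1..length T}"
      using bij_betwE[OF assms(1)] that by blast
    then show ?thesis
      using True by simp
  qed
  then have "\<forall>j\<in>{1..length T}. \<pi> j < \<pi> i \<longrightarrow> rlce T j i < m"
    by blast
  moreover have "LPF T \<pi> i = 0"
    using True by (simp add: LPF_def)
  ultimately show ?thesis
    using assms(3) by simp
next
  case False
  have "1 \<in> \<pi> ` {1..length T}"
    using assms(1,2) by (simp add: bij_betw_def)
  then obtain j where j: "j \<in> {1..length T}" "\<pi> j = 1"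
    by (metis imageE)
  have "\<pi> i \<in> {1..length T}"
    using bij_betwE[OF assms(1)] assms(2) by blast
  let ?A = "{rlce T j i | j. j \<in> {1..length T} \<and> \<pi> j < \<pi> i}"
  have "rlce T j i \<in> ?A"
    using False \<open>\<pi> i \<in> {1..length T}\<close> j by auto
  then have "Max ?A < m \<longleftrightarrow> (\<forall>a\<in>?A. a < m)"
    by (intro Max_less_iff) auto
  with False show ?thesis
    unfolding LPF_def by fastforce
qed

lemma primary_occ_iff_pi_minimal:
  assumes "bij_betw \<pi> {1..length T} {1..length T}" "P \<noteq> []"
  shows "primary_occ T \<pi> P i \<longleftrightarrow>
           occurs_at T P i \<and> (\<forall>j. occurs_at T P j \<longrightarrow> \<pi> i \<le> \<pi> j)"
proof (cases "occurs_at T P i")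
  case True
  have "LPF T \<pi> i < length P \<longleftrightarrow>
          (\<forall>j\<in>{1..length T}. \<pi> j < \<pi> i \<longrightarrow> rlce T j i < length P)"
    using LPF_less_iff[OF assms(1) occurs_at_in_range] True assms(2) by blast
  also have "\<dots> \<longleftrightarrow> (\<forall>j\<in>{1..length T}. occurs_at T P j \<longrightarrow> \<pi> i \<le> \<pi> j)"
    using occurs_at_iff_rlce_ge[OF assms(2) True] by (auto simp: not_less)
  also have "\<dots> \<longleftrightarrow> (\<forall>j. occurs_at T P j \<longrightarrow> \<pi> i \<le> \<pi> j)"
    using occurs_at_in_range[OF assms(2)] by blast
  finally show ?thesis
    using True by (simp add: primary_occ_def)
qed (simp add: primary_occ_def)

theorem lemma28:
  fixes T P :: "'a::linorder list" and \<pi> :: "nat \<Rightarrow> nat"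
  assumes "is_text T"
    and "order_preserving T \<pi>"
    and "P \<noteq> []"
    and "\<exists>i. occurs_at T P i"
  shows "(\<exists>!i. primary_occ T \<pi> P i) \<and>
         (\<forall>i. primary_occ T \<pi> P i \<longrightarrow> (\<forall>j. occurs_at T P j \<longrightarrow> \<pi> i \<le> \<pi> j))"
proof -
  have bij: "bij_betw \<pi> {1..length T} {1..length T}"
    using assms(2) by (simp add: order_preserving_def)
  note primary = primary_occ_iff_pi_minimal[OF bij assms(3)]
  obtain i where occ_i: "occurs_at T P i" and min_i: "\<forall>j. occurs_at T P j \<longrightarrow> \<pi> i \<le> \<pi> j"
    using assms(4) ex_has_least_nat[where m = \<pi> and P = "occurs_at T P"] by blast
  have "primary_occ T \<pi> P i"
    using primary[of i] occ_i min_i by simp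
  moreover have "k = i" if "primary_occ T \<pi> P k" for k
  proof -
    have occ_k: "occurs_at T P k" and "\<pi> k \<le> \<pi> i"
      using that primary[of k] occ_i by simp_all
    with min_i have "\<pi> k = \<pi> i"
      by (simp add: order.antisym)
    moreover have "k \<in> {1..length T}" "i \<in> {1..length T}"
      using occ_k occ_i occurs_at_in_range[OF assms(3)] by simp_all
    ultimately show ?thesis
      using bij_betw_imp_inj_on[OF bij] by (simp add: inj_on_eq_iff)
  qed
  ultimately have "\<exists>!i. primary_occ T \<pi> P i"
    by blast
  moreover have "\<forall>i. primary_occ T \<pi> P i \<longrightarrow> (\<forall>j. occurs_at T P j \<longrightarrow> \<pi> i \<le> \<pi> j)"
    using primary by simp
  ultimately show ?thesis ..
qed

end
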